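(* Let $X_1,X_2$ be independent random variables on $S^1$, each centered at $P=(1,0)$. Then $$V(X_1+X_2)=V(X_1)+V(X_2)-\frac{V(X_1)V(X_2)}{2}.$$
   Context: A random variable $X$ on $S^1=\{x\in\mathbb{R}^2:\|x\|=1\}$ is given by a density of its angle $\Theta\in[-\pi,\pi)$, with $X=(\cos\Theta,\sin\Theta)$. $X$ is centered at $P=(1,0)$ if its mean value lies in the direction of $P$, i.e. $E[\sin\Theta]=0$. The variance is $V(X)=E[\|X-P\|^2]=E[2-2\cos\Theta]$. For independent $X_1,X_2$ with angles $\Theta_1,\Theta_2$, the sum $X_1+X_2$ is the point with angle $\Theta_1+\Theta_2$ (mod $2\pi$), i.e. its angle has density $f(\theta)=\int_{-\pi}^{\pi}f_1(\theta')f_2(\theta-\theta')\,d\theta'$. *)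

theory Defs
  imports "HOL-Analysis.Analysis"
begin

text \<open>A random point on the circle is given by a probability density of its angle
  on [-pi, pi).\<close>
definition circ_density :: "(real \<Rightarrow> real) \<Rightarrow> bool" where
  "circ_density f \<longleftrightarrow>
     (\<forall>\<theta>\<in>{-pi..<pi}. 0 \<le> f \<theta>) \<and>
     set_integrable lborel {-pi..<pi} f \<and>
     (LINT \<theta>:{-pi..<pi}|lborel. f \<theta>) = 1"

definition angle_wrap :: "real \<Rightarrow> real" where
  "angle_wrap x = x - 2 * pi * of_int \<lfloor>(x + pi) / (2 * pi)\<rfloor>"

text \<open>Density of the angle of the sum X1 + X2 of independent X1, X2 (angles added mod 2 pi).\<close>
definition circ_conv :: "(real \<Rightarrow> real) \<Rightarrow> (real \<Rightarrow> real) \<Rightarrow> real \<Rightarrow> real" where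
  "circ_conv f1 f2 \<theta> = (LINT \<theta>':{-pi..<pi}|lborel. f1 \<theta>' * f2 (angle_wrap (\<theta> - \<theta>')))"

definition circ_centered :: "(real \<Rightarrow> real) \<Rightarrow> bool" where
  "circ_centered f \<longleftrightarrow> (LINT \<theta>:{-pi..<pi}|lborel. sin \<theta> * f \<theta>) = 0"

text \<open>Variance V(X) = E[||X - P||^2] = E[2 - 2 cos Theta].\<close>
definition circ_var :: "(real \<Rightarrow> real) \<Rightarrow> real" where
  "circ_var f = (LINT \<theta>:{-pi..<pi}|lborel. (2 - 2 * cos \<theta>) * f \<theta>)"

end

theory Submission
  imports Defs
begin

(* With C_i = E[cos Theta_i] and S_i = E[sin Theta_i], the variance is V(X_i) = 2 - 2 C_i.
  By the angle addition formula, Fubini and the invariance of the circle integral under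
  rotations, E[cos (Theta_1 + Theta_2)] = C_1 C_2 - S_1 S_2, the real part of the
  multiplicativity of characteristic functions.  Centering means S_i = 0, so
  2 - V(X_1 + X_2) = (2 - V(X_1)) (2 - V(X_2)) / 2. *)

definition circ_cos_moment :: "(real \<Rightarrow> real) \<Rightarrow> real" where
  "circ_cos_moment f = (LINT \<theta>:{-pi..<pi}|lborel. cos \<theta> * f \<theta>)"

definition circ_sin_moment :: "(real \<Rightarrow> real) \<Rightarrow> real" where
  "circ_sin_moment f = (LINT \<theta>:{-pi..<pi}|lborel. sin \<theta> * f \<theta>)"

lemma circ_centered_iff_sin_moment: "circ_centered f \<longleftrightarrow> circ_sin_moment f = 0"
  unfolding circ_centered_def circ_sin_moment_def ..

lemma integrable_bounded_mult:
  fixes f g :: "'a \<Rightarrow> real"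
  assumes f: "integrable M f" and g: "g \<in> borel_measurable M" and B: "\<And>x. \<bar>g x\<bar> \<le> B"
  shows "integrable M (\<lambda>x. g x * f x)"
proof (rule Bochner_Integration.integrable_bound)
  show "integrable M (\<lambda>x. B * f x)" using f by simp
  show "(\<lambda>x. g x * f x) \<in> borel_measurable M" using g borel_measurable_integrable[OF f] by simp
  show "AE x in M. norm (g x * f x) \<le> norm (B * f x)"
  proof (rule AE_I2)
    fix x
    have "\<bar>g x\<bar> * \<bar>f x\<bar> \<le> B * \<bar>f x\<bar>" by (rule mult_right_mono[OF B]) simp
    then show "norm (g x * f x) \<le> norm (B * f x)"
      using order_trans[OF abs_ge_zero B] by (simp add: abs_mult)
  qed
qed

lemma set_integrable_bounded_mult:
  fixes f g :: "real \<Rightarrow> real"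
  assumes f: "set_integrable lborel A f" and g: "g \<in> borel_measurable borel"
    and B: "\<And>x. \<bar>g x\<bar> \<le> B"
  shows "set_integrable lborel A (\<lambda>x. g x * f x)"
proof -
  have "integrable lborel (\<lambda>x. g x * (indicator A x *\<^sub>R f x))"
    using integrable_bounded_mult[OF f[unfolded set_integrable_def] _ B] g by simp
  then show ?thesis unfolding set_integrable_def by (simp add: mult.left_commute)
qed

lemma set_integrable_cos_sin_mult:
  assumes "set_integrable lborel {-pi..<pi} f"
  shows "set_integrable lborel {-pi..<pi} (\<lambda>\<theta>. cos \<theta> * f \<theta>)"
    and "set_integrable lborel {-pi..<pi} (\<lambda>\<theta>. sin \<theta> * f \<theta>)"
  using assms by (auto intro: set_integrable_bounded_mult[where B = 1])

lemma circ_var_eq_cos_moment: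
  assumes "circ_density f"
  shows "circ_var f = 2 - 2 * circ_cos_moment f"
proof -
  have f: "set_integrable lborel {-pi..<pi} f" and mass: "(LINT \<theta>:{-pi..<pi}|lborel. f \<theta>) = 1"
    using assms unfolding circ_density_def by auto
  have "circ_var f = (LINT \<theta>:{-pi..<pi}|lborel. 2 * f \<theta> - 2 * (cos \<theta> * f \<theta>))"
    unfolding circ_var_def by (rule set_lebesgue_integral_cong) (auto simp: algebra_simps)
  also have "\<dots> = 2 * (LINT \<theta>:{-pi..<pi}|lborel. f \<theta>) - 2 * circ_cos_moment f"
    unfolding circ_cos_moment_def using f set_integrable_cos_sin_mult[OF f] by (subst set_integral_diff(2)) auto
  finally show ?thesis using mass by simp
qed

lemma angle_wrap_unique:
  assumes "-pi \<le> x - 2 * pi * of_int k" and "x - 2 * pi * of_int k < pi"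
  shows "angle_wrap x = x - 2 * pi * of_int k"
proof -
  have "\<lfloor>(x + pi) / (2 * pi)\<rfloor> = k"
    using assms by (intro floor_unique) (simp_all add: field_simps)
  then show ?thesis unfolding angle_wrap_def by simp
qed

lemma angle_wrap_in_range: "angle_wrap x \<in> {-pi..<pi}"
proof -
  define q where "q = (x + pi) / (2 * pi)"
  have q: "q * (2 * pi) = x + pi" unfolding q_def by simp
  have "of_int \<lfloor>q\<rfloor> * (2 * pi) \<le> q * (2 * pi)" by (intro mult_right_mono) auto
  moreover have "q * (2 * pi) < (of_int \<lfloor>q\<rfloor> + 1) * (2 * pi)" by (intro mult_strict_right_mono) auto
  ultimately show ?thesis unfolding angle_wrap_def q_def[symmetric] q by (simp add: algebra_simps)
qed

lemma angle_wrap_add_multiple: "angle_wrap (x + 2 * pi * of_int k) = angle_wrap x"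
proof -
  have "(x + 2 * pi * of_int k + pi) / (2 * pi) = (x + pi) / (2 * pi) + of_int k"
    by (simp add: field_simps)
  then show ?thesis unfolding angle_wrap_def by (simp add: algebra_simps)
qed

lemma cos_angle_wrap_add: "cos (angle_wrap z + x) = cos (z + x)"
proof -
  define k where "k = \<lfloor>(z + pi) / (2 * pi)\<rfloor>"
  have "angle_wrap z + x = (z + x) - 2 * pi * of_int k"
    unfolding angle_wrap_def k_def by simp
  then show ?thesis by (simp only:) (simp add: cos_diff)
qed

lemma angle_wrap_measurable [measurable]: "angle_wrap \<in> borel_measurable borel"
  unfolding angle_wrap_def by measurable

lemma set_integral_Ico_translate:
  fixes H G :: "real \<Rightarrow> real"
  assumes H: "set_integrable lborel {c..<d} H"
    and G: "\<And>y. y \<in> {c - t..<d - t} \<Longrightarrow> G y = H (y + t)"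
  shows "set_integrable lborel {c - t..<d - t} G"
    and "(LINT y:{c - t..<d - t}|lborel. G y) = (LINT u:{c..<d}|lborel. H u)"
proof -
  let ?h = "\<lambda>u. indicator {c..<d} u *\<^sub>R H u"
  have eq: "(\<lambda>y. indicator {c - t..<d - t} y *\<^sub>R G y) = (\<lambda>y. ?h (t + 1 * y))"
    using G by (auto simp: indicator_def algebra_simps)
  have "integrable lborel ?h" using H by (simp add: set_integrable_def)
  then show "set_integrable lborel {c - t..<d - t} G"
    unfolding set_integrable_def eq using lborel_integrable_real_affine_iff[of 1 ?h t] by simp
  show "(LINT y:{c - t..<d - t}|lborel. G y) = (LINT u:{c..<d}|lborel. H u)"
    unfolding set_lebesgue_integral_def eq using lborel_integral_real_affine[of 1 ?h t] by simp
qed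

(* On each of [-pi, a - pi) and [a - pi, pi), angle_wrap (y - a) is a translate of y. *)
lemma set_integral_angle_wrap_rotate_0_2pi:
  fixes H :: "real \<Rightarrow> real"
  assumes H: "set_integrable lborel {-pi..<pi} H" and a: "0 \<le> a" "a \<le> 2 * pi"
  shows "set_integrable lborel {-pi..<pi} (\<lambda>y. H (angle_wrap (y - a)))"
    and "(LINT y:{-pi..<pi}|lborel. H (angle_wrap (y - a))) = (LINT u:{-pi..<pi}|lborel. H u)"
proof -
  have split: "{-pi..<pi} = {-pi..<a - pi} \<union> {a - pi..<pi}" "{-pi..<pi} = {pi - a..<pi} \<union> {-pi..<pi - a}"
    using a by auto
  have H_hi: "set_integrable lborel {pi - a..<pi} H" and H_lo: "set_integrable lborel {-pi..<pi - a} H"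
    using a by (auto intro: set_integrable_subset[OF H])
  have "angle_wrap (y - a) = y + (2 * pi - a)" if "y \<in> {-pi..<a - pi}" for y
    using angle_wrap_unique[of "y - a" "-1"] that a by auto
  then have lo: "set_integrable lborel {-pi..<a - pi} (\<lambda>y. H (angle_wrap (y - a)))"
      "(LINT y:{-pi..<a - pi}|lborel. H (angle_wrap (y - a))) = (LINT u:{pi - a..<pi}|lborel. H u)"
    using set_integral_Ico_translate[OF H_hi, of "2 * pi - a"] by simp_all
  have "angle_wrap (y - a) = y + - a" if "y \<in> {a - pi..<pi}" for y
    using angle_wrap_unique[of "y - a" 0] that a by auto
  then have hi: "set_integrable lborel {a - pi..<pi} (\<lambda>y. H (angle_wrap (y - a)))"
      "(LINT y:{a - pi..<pi}|lborel. H (angle_wrap (y - a))) = (LINT u:{-pi..<pi - a}|lborel. H u)"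
    using set_integral_Ico_translate[OF H_lo, of "- a"] by simp_all
  show "set_integrable lborel {-pi..<pi} (\<lambda>y. H (angle_wrap (y - a)))"
    unfolding split(1) by (rule set_integrable_Un[OF lo(1) hi(1)]) auto
  show "(LINT y:{-pi..<pi}|lborel. H (angle_wrap (y - a))) = (LINT u:{-pi..<pi}|lborel. H u)"
    using set_integral_Un[OF _ lo(1) hi(1)] set_integral_Un[OF _ H_hi H_lo] lo(2) hi(2)
    unfolding split[symmetric] by simp
qed

lemma set_integral_angle_wrap_rotate:
  fixes H :: "real \<Rightarrow> real"
  assumes H: "set_integrable lborel {-pi..<pi} H"
  shows "set_integrable lborel {-pi..<pi} (\<lambda>y. H (angle_wrap (y - a)))"
    and "(LINT y:{-pi..<pi}|lborel. H (angle_wrap (y - a))) = (LINT u:{-pi..<pi}|lborel. H u)"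
proof -
  define k where "k = \<lfloor>a / (2 * pi)\<rfloor>"
  define b where "b = a - 2 * pi * of_int k"
  have "of_int k * (2 * pi) \<le> a / (2 * pi) * (2 * pi)" unfolding k_def by (intro mult_right_mono) auto
  moreover have "a / (2 * pi) * (2 * pi) \<le> (of_int k + 1) * (2 * pi)" unfolding k_def by (intro mult_right_mono) auto
  ultimately have b: "0 \<le> b" "b \<le> 2 * pi" unfolding b_def by (simp_all add: algebra_simps)
  have "angle_wrap (y - a) = angle_wrap (y - b)" for y
    using angle_wrap_add_multiple[of "y - a" k] by (simp add: b_def algebra_simps)
  then show "set_integrable lborel {-pi..<pi} (\<lambda>y. H (angle_wrap (y - a)))"
    and "(LINT y:{-pi..<pi}|lborel. H (angle_wrap (y - a))) = (LINT u:{-pi..<pi}|lborel. H u)"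
    using set_integral_angle_wrap_rotate_0_2pi[OF H b] by simp_all
qed

lemma integrable_circ_conv_kernel:
  fixes f1 f2 :: "real \<Rightarrow> real"
  assumes f1: "set_integrable lborel {-pi..<pi} f1" and f2: "set_integrable lborel {-pi..<pi} f2"
  shows "integrable (lborel \<Otimes>\<^sub>M lborel) (\<lambda>(x, y).
    indicator {-pi..<pi} x * f1 x * (indicator {-pi..<pi} y * f2 (angle_wrap (y - x))))"
proof -
  define I where "I = {-pi..<pi::real}"
  define g1 where "g1 x = indicator I x * f1 x" for x
  define g2 where "g2 x = indicator I x * f2 x" for x
  have g1_int: "integrable lborel g1" and g2_int: "integrable lborel g2"
    using f1 f2 unfolding set_integrable_def g1_def g2_def I_def by simp_all
  have [measurable]: "g1 \<in> borel_measurable borel" "g2 \<in> borel_measurable borel" "I \<in> sets borel"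
    using borel_measurable_integrable[OF g1_int] borel_measurable_integrable[OF g2_int]
    unfolding I_def by simp_all
  (* f2 need not be measurable outside [-pi, pi), which angle_wrap never leaves. *)
  have f2_wrap: "f2 (angle_wrap z) = g2 (angle_wrap z)" for z
    using angle_wrap_in_range unfolding g2_def I_def by simp
  define K where "K x y = g1 x * (indicator I y * g2 (angle_wrap (y - x)))" for x y
  have K_slice: "K x = (\<lambda>y. g1 x * (indicator I y *\<^sub>R f2 (angle_wrap (y - x))))" for x
    unfolding K_def f2_wrap by auto
  have "integrable (lborel \<Otimes>\<^sub>M lborel) (case_prod K)"
  proof (rule lborel_pair.Fubini_integrable)
    show "case_prod K \<in> borel_measurable (lborel \<Otimes>\<^sub>M lborel)" unfolding K_def by measurable
    have "(\<integral>y. norm (K x y) \<partial>lborel) = \<bar>g1 x\<bar> * (LINT u:I|lborel. \<bar>f2 u\<bar>)" for x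
    proof -
      have "(\<integral>y. norm (K x y) \<partial>lborel) = \<bar>g1 x\<bar> * (LINT y:I|lborel. \<bar>f2 (angle_wrap (y - x))\<bar>)"
        unfolding K_slice set_lebesgue_integral_def by (simp add: abs_mult)
      then show ?thesis
        using set_integral_angle_wrap_rotate(2)[OF set_integrable_abs[OF f2]] by (simp add: I_def)
    qed
    then show "integrable lborel (\<lambda>x. \<integral>y. norm (case_prod K (x, y)) \<partial>lborel)"
      using g1_int by simp
    show "AE x in lborel. integrable lborel (\<lambda>y. case_prod K (x, y))"
      using set_integral_angle_wrap_rotate(1)[OF f2]
      unfolding K_slice set_integrable_def I_def by simp
  qed
  moreover have "case_prod K = (\<lambda>(x, y).
      indicator I x * f1 x * (indicator I y * f2 (angle_wrap (y - x))))"
    unfolding K_def g1_def f2_wrap by auto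
  ultimately show ?thesis unfolding I_def by simp
qed

lemma set_integral_circ_conv:
  fixes f1 f2 \<phi> :: "real \<Rightarrow> real"
  assumes f1: "set_integrable lborel {-pi..<pi} f1" and f2: "set_integrable lborel {-pi..<pi} f2"
    and \<phi>: "\<phi> \<in> borel_measurable borel" and B: "\<And>y. \<bar>\<phi> y\<bar> \<le> B"
  shows "set_integrable lborel {-pi..<pi} (\<lambda>y. \<phi> y * circ_conv f1 f2 y)"
    and "(LINT y:{-pi..<pi}|lborel. \<phi> y * circ_conv f1 f2 y)
       = (LINT x:{-pi..<pi}|lborel. f1 x * (LINT y:{-pi..<pi}|lborel. \<phi> y * f2 (angle_wrap (y - x))))"
proof -
  define I where "I = {-pi..<pi::real}"
  define F where "F x y = \<phi> y * (indicator I x * f1 x * (indicator I y * f2 (angle_wrap (y - x))))"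
    for x y
  have "(\<lambda>p. \<phi> (snd p)) \<in> borel_measurable (lborel \<Otimes>\<^sub>M lborel)" using \<phi> by measurable
  then have F_int: "integrable (lborel \<Otimes>\<^sub>M lborel) (case_prod F)"
    using integrable_bounded_mult[OF integrable_circ_conv_kernel[OF f1 f2], of "\<lambda>p. \<phi> (snd p)" B] B
    unfolding F_def I_def by (simp add: case_prod_beta')
  have F_x: "(\<integral>x. F x y \<partial>lborel) = indicator I y *\<^sub>R (\<phi> y * circ_conv f1 f2 y)" for y
  proof -
    have "(\<integral>x. F x y \<partial>lborel)
        = (\<integral>x. (indicator I y * \<phi> y) * (indicator I x *\<^sub>R (f1 x * f2 (angle_wrap (y - x)))) \<partial>lborel)"
      unfolding F_def by (rule Bochner_Integration.integral_cong) auto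
    then show ?thesis unfolding circ_conv_def set_lebesgue_integral_def I_def by simp
  qed
  have F_y: "(\<integral>y. F x y \<partial>lborel)
      = indicator I x *\<^sub>R (f1 x * (LINT y:I|lborel. \<phi> y * f2 (angle_wrap (y - x))))" for x
  proof -
    have "(\<integral>y. F x y \<partial>lborel)
        = (\<integral>y. (indicator I x * f1 x) * (indicator I y *\<^sub>R (\<phi> y * f2 (angle_wrap (y - x)))) \<partial>lborel)"
      unfolding F_def by (rule Bochner_Integration.integral_cong) auto
    then show ?thesis unfolding set_lebesgue_integral_def by simp
  qed
  show "set_integrable lborel {-pi..<pi} (\<lambda>y. \<phi> y * circ_conv f1 f2 y)"
    using lborel_pair.integrable_snd[OF F_int] unfolding F_x set_integrable_def I_def .
  show "(LINT y:{-pi..<pi}|lborel. \<phi> y * circ_conv f1 f2 y)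
       = (LINT x:{-pi..<pi}|lborel. f1 x * (LINT y:{-pi..<pi}|lborel. \<phi> y * f2 (angle_wrap (y - x))))"
    using lborel_pair.Fubini_integral[OF F_int] unfolding F_x F_y set_lebesgue_integral_def I_def .
qed

lemma circ_density_circ_conv:
  assumes "circ_density f1" and "circ_density f2"
  shows "circ_density (circ_conv f1 f2)"
proof -
  have f1: "set_integrable lborel {-pi..<pi} f1" "\<And>\<theta>. \<theta> \<in> {-pi..<pi} \<Longrightarrow> 0 \<le> f1 \<theta>"
      "(LINT \<theta>:{-pi..<pi}|lborel. f1 \<theta>) = 1"
    and f2: "set_integrable lborel {-pi..<pi} f2" "\<And>\<theta>. \<theta> \<in> {-pi..<pi} \<Longrightarrow> 0 \<le> f2 \<theta>"
      "(LINT \<theta>:{-pi..<pi}|lborel. f2 \<theta>) = 1"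
    using assms unfolding circ_density_def by auto
  note conv = set_integral_circ_conv[OF f1(1) f2(1), of "\<lambda>_. 1" 1, simplified]
  have "0 \<le> circ_conv f1 f2 \<theta>" for \<theta>
    unfolding circ_conv_def set_lebesgue_integral_def
    using f1(2) f2(2)[OF angle_wrap_in_range] by (intro Bochner_Integration.integral_nonneg) (simp add: indicator_def)
  moreover have "(LINT y:{-pi..<pi}|lborel. f2 (angle_wrap (y - x))) = 1" for x
    using set_integral_angle_wrap_rotate(2)[OF f2(1)] f2(3) by simp
  ultimately show ?thesis
    unfolding circ_density_def using conv f1(3) by simp
qed

lemma circ_cos_moment_circ_conv:
  assumes f1: "set_integrable lborel {-pi..<pi} f1" and f2: "set_integrable lborel {-pi..<pi} f2"
  shows "circ_cos_moment (circ_conv f1 f2)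
    = circ_cos_moment f1 * circ_cos_moment f2 - circ_sin_moment f1 * circ_sin_moment f2"
proof -
  have rotated: "(LINT y:{-pi..<pi}|lborel. cos y * f2 (angle_wrap (y - x)))
      = cos x * circ_cos_moment f2 - sin x * circ_sin_moment f2" for x
  proof -
    define H where "H u = cos (u + x) * f2 u" for u
    have "H (angle_wrap (y - x)) = cos y * f2 (angle_wrap (y - x))" for y
      unfolding H_def cos_angle_wrap_add by simp
    moreover have "set_integrable lborel {-pi..<pi} H"
      unfolding H_def by (rule set_integrable_bounded_mult[OF f2, where B = 1]) auto
    ultimately have "(LINT y:{-pi..<pi}|lborel. cos y * f2 (angle_wrap (y - x))) = (LINT u:{-pi..<pi}|lborel. H u)"
      using set_integral_angle_wrap_rotate(2)[of H x] by simp
    also have "\<dots> = (LINT u:{-pi..<pi}|lborel. cos x * (cos u * f2 u) - sin x * (sin u * f2 u))"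
      unfolding H_def by (rule set_lebesgue_integral_cong) (auto simp: cos_add algebra_simps)
    also have "\<dots> = cos x * circ_cos_moment f2 - sin x * circ_sin_moment f2"
      unfolding circ_cos_moment_def circ_sin_moment_def using set_integrable_cos_sin_mult[OF f2]
      by (subst set_integral_diff(2)) auto
    finally show ?thesis .
  qed
  have "circ_cos_moment (circ_conv f1 f2)
      = (LINT x:{-pi..<pi}|lborel. f1 x * (LINT y:{-pi..<pi}|lborel. cos y * f2 (angle_wrap (y - x))))"
    unfolding circ_cos_moment_def by (rule set_integral_circ_conv(2)[OF f1 f2, where B = 1]) auto
  also have "\<dots> = (LINT x:{-pi..<pi}|lborel.
      circ_cos_moment f2 * (cos x * f1 x) - circ_sin_moment f2 * (sin x * f1 x))"
    unfolding rotated by (rule set_lebesgue_integral_cong) (auto simp: algebra_simps)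
  also have "\<dots> = circ_cos_moment f1 * circ_cos_moment f2 - circ_sin_moment f1 * circ_sin_moment f2"
    unfolding circ_cos_moment_def circ_sin_moment_def using set_integrable_cos_sin_mult[OF f1]
    by (subst set_integral_diff(2)) auto
  finally show ?thesis .
qed

theorem theorem3p7:
  fixes f1 f2 :: "real \<Rightarrow> real"
  assumes "circ_density f1" and "circ_density f2"
    and "circ_centered f1" and "circ_centered f2"
  shows "circ_var (circ_conv f1 f2) = circ_var f1 + circ_var f2 - circ_var f1 * circ_var f2 / 2"
proof -
  have "set_integrable lborel {-pi..<pi} f1" "set_integrable lborel {-pi..<pi} f2"
    using assms(1,2) unfolding circ_density_def by auto
  then have "circ_cos_moment (circ_conv f1 f2) = circ_cos_moment f1 * circ_cos_moment f2"
    using circ_cos_moment_circ_conv assms(3,4) by (simp add: circ_centered_iff_sin_moment)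
  then have "circ_var (circ_conv f1 f2) = 2 - 2 * (circ_cos_moment f1 * circ_cos_moment f2)"
    using circ_var_eq_cos_moment[OF circ_density_circ_conv[OF assms(1,2)]] by simp
  then show ?thesis
    unfolding circ_var_eq_cos_moment[OF assms(1)] circ_var_eq_cos_moment[OF assms(2)]
    by (simp add: field_simps)
qed

end
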